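(* Assume (H1'). Let $\phi$ be an admissible policy and $Y$ a $\mathbb W_2$-valued random variable on $\Omega^0$. If $$\lim_{n\to\infty}\mathbb P^0\Big[\bigcap_{k=0}^{\infty}\bigcup_{l=0}^{n}\mathscr A_l(Y)\cap\theta^k\mathscr A_{l+k}(Y)\Big]=1,$$ then $(U^{[Y]}_n)_{n\ge0}$ converges with strong backwards coupling to a stationary sequence $(U\circ\theta^n)_{n}$, where $U$ is a $\mathbb W_2$-valued solution of $U\circ\theta=(U\odot_\phi(V^0,\Sigma^0))\odot_\phi(V^1,\Sigma^1)$, $\mathbb P^0$-a.s.
   Context: $G=(\mathcal V,\mathcal E)$ finite connected simple graph; $\mathcal S$ the set of lists of preferences (for each class a linear ordering of its neighbours); $\phi$ a matching policy with probability $\nu_\phi$ on $\mathcal S$; $\mathbb W=\{w\in\mathcal V^*:|w|_i|w|_j=0 \text{ whenever } i,j \text{ adjacent}\}$, $\mathbb W_2$ its words of even length; admissible $\phi$: a map $\odot_\phi:\mathbb W\times(\mathcal V\times\mathcal S)\to\mathbb W$, $w\odot_\phi(v,\sigma)=wv$ if no letter of $w$ is adjacent to $v$, else $w$ with one letter adjacent to $v$ (chosen by $\phi$) deleted. (H1'): the sequence $(V_{2n},\Sigma_{2n},V_{2n+1},\Sigma_{2n+1})_{n\in\mathbb Z}$ (classes and preference lists of arriving items) is stationary ergodic, with $V_{2n}\sim\mu^0$, $V_{2n+1}\sim\mu^1$, $\Sigma_m\sim\nu_\phi$, and $\mu=(\mu^0+\mu^1)/2$ has full support. Work on the canonical space $\Omega^0=(\mathcal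 V\times\mathcal S\times\mathcal V\times\mathcal S)^{\mathbb Z}$ with the law $\mathbb P^0$ of this sequence and the shift $\theta((\omega_n)_n)=(\omega_{n+1})_n$; $(V^0,\Sigma^0,V^1,\Sigma^1)$ is the $0$-coordinate projection. For a $\mathbb W_2$-valued r.v. $Y$: $U^{[Y]}_0=Y$, $U^{[Y]}_{n+1}=(U^{[Y]}_n\odot_\phi(V^0\circ\theta^n,\Sigma^0\circ\theta^n))\odot_\phi(V^1\circ\theta^n,\Sigma^1\circ\theta^n)$. $\mathscr A_n(Y)=\{U^{[Y]}_n=\emptyset\}$. $(U^{[Y]}_n)$ converges with strong backwards coupling to $(U\circ\theta^n)$ if a.s. there is $N^*$ with $U^{[Y]}_n\circ\theta^{-n}=U$ for all $n\ge N^*$. *)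

theory Defs
  imports "HOL-Probability.Probability"
begin

definition simple_connected_graph :: "('v::finite \<Rightarrow> 'v \<Rightarrow> bool) \<Rightarrow> bool" where
  "simple_connected_graph E \<longleftrightarrow>
     (\<forall>u v. E u v \<longrightarrow> E v u) \<and> (\<forall>u. \<not> E u u) \<and> (\<forall>u v. E\<^sup>*\<^sup>* u v)"

text \<open>Lists of preferences: for each class v, a linear ordering (a duplicate-free list)
  of its neighbours.\<close>
definition prefs :: "('v \<Rightarrow> 'v \<Rightarrow> bool) \<Rightarrow> ('v \<Rightarrow> 'v list) set" where
  "prefs E = {\<sigma>. \<forall>v. distinct (\<sigma> v) \<and> set (\<sigma> v) = {u. E v u}}"

definition words :: "('v \<Rightarrow> 'v \<Rightarrow> bool) \<Rightarrow> 'v list set" where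
  "words E = {w. \<forall>i j. i \<in> set w \<longrightarrow> j \<in> set w \<longrightarrow> \<not> E i j}"

definition words2 :: "('v \<Rightarrow> 'v \<Rightarrow> bool) \<Rightarrow> 'v list set" where
  "words2 E = {w \<in> words E. even (length w)}"

text \<open>Admissible matching policy, given through its update map
  odot w v \<sigma> = w \<odot>_\<phi> (v,\<sigma>).\<close>
definition admissible ::
  "('v \<Rightarrow> 'v \<Rightarrow> bool) \<Rightarrow> ('v list \<Rightarrow> 'v \<Rightarrow> ('v \<Rightarrow> 'v list) \<Rightarrow> 'v list) \<Rightarrow> bool" where
  "admissible E odot \<longleftrightarrow>
     (\<forall>w \<in> words E. \<forall>v. \<forall>\<sigma> \<in> prefs E.
        (if (\<forall>x \<in> set w. \<not> E x v) then odot w v \<sigma> = w @ [v]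
         else (\<exists>i < length w. E (w ! i) v \<and> odot w v \<sigma> = take i w @ drop (Suc i) w)))"

type_synonym 'v arrival = "'v \<times> ('v \<Rightarrow> 'v list) \<times> 'v \<times> ('v \<Rightarrow> 'v list)"
type_synonym 'v omega = "int \<Rightarrow> 'v arrival"

definition arrivals :: "('v \<Rightarrow> 'v \<Rightarrow> bool) \<Rightarrow> 'v arrival set" where
  "arrivals E = UNIV \<times> prefs E \<times> UNIV \<times> prefs E"

definition canonical_space :: "('v \<Rightarrow> 'v \<Rightarrow> bool) \<Rightarrow> 'v omega measure" where
  "canonical_space E = Pi\<^sub>M UNIV (\<lambda>_. count_space (arrivals E))"

definition shift :: "'v omega \<Rightarrow> 'v omega" where
  "shift \<omega> = (\<lambda>n. \<omega> (n + 1))"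

definition shift_inv :: "'v omega \<Rightarrow> 'v omega" where
  "shift_inv \<omega> = (\<lambda>n. \<omega> (n - 1))"

definition V0 :: "'v omega \<Rightarrow> 'v" where "V0 \<omega> = fst (\<omega> 0)"
definition S0 :: "'v omega \<Rightarrow> ('v \<Rightarrow> 'v list)" where "S0 \<omega> = fst (snd (\<omega> 0))"
definition V1 :: "'v omega \<Rightarrow> 'v" where "V1 \<omega> = fst (snd (snd (\<omega> 0)))"
definition S1 :: "'v omega \<Rightarrow> ('v \<Rightarrow> 'v list)" where "S1 \<omega> = snd (snd (snd (\<omega> 0)))"

definition measure_preserving_map :: "'a measure \<Rightarrow> ('a \<Rightarrow> 'a) \<Rightarrow> bool" where
  "measure_preserving_map M T \<longleftrightarrow> T \<in> measurable M M \<and> distr M M T = M"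

definition ergodic_map :: "'a measure \<Rightarrow> ('a \<Rightarrow> 'a) \<Rightarrow> bool" where
  "ergodic_map M T \<longleftrightarrow>
     (\<forall>A \<in> sets M. T -` A \<inter> space M = A \<longrightarrow> measure M A = 0 \<or> measure M A = 1)"

primrec Useq ::
  "('v list \<Rightarrow> 'v \<Rightarrow> ('v \<Rightarrow> 'v list) \<Rightarrow> 'v list) \<Rightarrow> ('v omega \<Rightarrow> 'v list)
     \<Rightarrow> nat \<Rightarrow> 'v omega \<Rightarrow> 'v list" where
  "Useq odot Y 0 \<omega> = Y \<omega>"
| "Useq odot Y (Suc n) \<omega> =
     (let \<omega>' = (shift ^^ n) \<omega> in
       odot (odot (Useq odot Y n \<omega>) (V0 \<omega>') (S0 \<omega>')) (V1 \<omega>') (S1 \<omega>'))"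

definition Aev :: "'v omega measure \<Rightarrow> ('v list \<Rightarrow> 'v \<Rightarrow> ('v \<Rightarrow> 'v list) \<Rightarrow> 'v list)
     \<Rightarrow> ('v omega \<Rightarrow> 'v list) \<Rightarrow> nat \<Rightarrow> 'v omega set" where
  "Aev M odot Y n = {\<omega> \<in> space M. Useq odot Y n \<omega> = []}"

definition shift_set :: "'v omega measure \<Rightarrow> nat \<Rightarrow> 'v omega set \<Rightarrow> 'v omega set" where
  "shift_set M k A = {\<omega> \<in> space M. (shift_inv ^^ k) \<omega> \<in> A}"

end

theory Submission
  imports Defs
begin

text \<open>The backward iterates \<open>Z m = U\<^sup>Y m \<circ> \<theta>\<^sup>-\<^sup>m\<close> all start from \<open>Y\<close> and are observed at
  time 0. On \<open>\<theta>\<^sup>n\<close> of the \<open>n\<close>-th event in the hypothesis, for every \<open>k\<close> the run started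
  \<open>k\<close> steps before time \<open>-n\<close> empties at the same instant as the run started at \<open>-n\<close>, at
  most \<open>n\<close> steps later; from then on both runs see the same arrivals, so \<open>Z (n + k) = Z n\<close>.
  Since \<open>\<theta>\<close> preserves the measure, these events have probabilities tending to one, hence
  \<open>Z m\<close> is almost surely eventually constant. Its eventual value solves the recursion because
  \<open>Z (m + 1) \<circ> \<theta>\<close> is \<open>Z m\<close> followed by one pair of arrivals.\<close>

lemma shift_funpow: "(shift ^^ n) \<omega> = (\<lambda>i. \<omega> (i + int n))"
  by (induction n arbitrary: \<omega>) (auto simp: shift_def algebra_simps)

lemma shift_inv_funpow: "(shift_inv ^^ n) \<omega> = (\<lambda>i. \<omega> (i - int n))"
  by (induction n arbitrary: \<omega>) (auto simp: shift_inv_def algebra_simps)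

lemma shift_funpow_shift_inv_funpow [simp]:
  "(shift ^^ n) ((shift_inv ^^ n) \<omega>) = \<omega>"
  "(shift_inv ^^ n) ((shift ^^ n) \<omega>) = \<omega>"
  by (simp_all add: shift_funpow shift_inv_funpow)

section \<open>The dynamics\<close>

definition update_pair ::
  "('v list \<Rightarrow> 'v \<Rightarrow> ('v \<Rightarrow> 'v list) \<Rightarrow> 'v list) \<Rightarrow> 'v list \<Rightarrow> 'v omega \<Rightarrow> 'v list" where
  "update_pair odot u \<omega> = odot (odot u (V0 \<omega>) (S0 \<omega>)) (V1 \<omega>) (S1 \<omega>)"

lemma Useq_Suc_update_pair:
  "Useq odot Y (Suc n) \<omega> = update_pair odot (Useq odot Y n \<omega>) ((shift ^^ n) \<omega>)"
  by (simp add: update_pair_def Let_def)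

text \<open>The run started at \<open>\<xi>\<close> is \<open>k\<close> steps ahead of the one started at \<open>\<eta> = \<theta>\<^sup>k \<xi>\<close>, so the
  first hypothesis says the two runs agree at one common absolute time.\<close>
lemma Useq_coupling:
  assumes "Useq odot Y l \<eta> = Useq odot Y (l + k) \<xi>" "(shift ^^ k) \<xi> = \<eta>" "l \<le> j"
  shows "Useq odot Y (j + k) \<xi> = Useq odot Y j \<eta>"
  using assms(3)
proof (induction j rule: dec_induct)
  case base
  then show ?case using assms(1) by simp
next
  case (step j)
  have "(shift ^^ (j + k)) \<xi> = (shift ^^ j) \<eta>"
    using assms(2) by (simp add: funpow_add)
  then show ?case using step.IH by (simp add: Useq_Suc_update_pair)
qed

definition backward_Useq ::
  "('v list \<Rightarrow> 'v \<Rightarrow> ('v \<Rightarrow> 'v list) \<Rightarrow> 'v list) \<Rightarrow> ('v omega \<Rightarrow> 'v list)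
     \<Rightarrow> nat \<Rightarrow> 'v omega \<Rightarrow> 'v list" where
  "backward_Useq odot Y m \<omega> = Useq odot Y m ((shift_inv ^^ m) \<omega>)"

lemma backward_Useq_Suc_shift:
  "backward_Useq odot Y (Suc m) (shift \<omega>) = update_pair odot (backward_Useq odot Y m \<omega>) \<omega>"
proof -
  have "(shift_inv ^^ Suc m) (shift \<omega>) = (shift_inv ^^ m) \<omega>"
    by (simp add: shift_inv_funpow shift_def shift_inv_def)
  then show ?thesis by (simp add: backward_Useq_def update_pair_def)
qed

lemma admissible_update_words:
  assumes "symp E" "irreflp E" "admissible E odot" "w \<in> words E" "\<sigma> \<in> prefs E"
  shows "odot w v \<sigma> \<in> words E \<and> (even (length (odot w v \<sigma>)) \<longleftrightarrow> odd (length w))"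
proof (cases "\<forall>x \<in> set w. \<not> E x v")
  case True
  then have "odot w v \<sigma> = w @ [v]"
    using assms(3-5) unfolding admissible_def by metis
  then show ?thesis
    using True assms(1,2,4) by (auto simp: words_def symp_def irreflp_def)
next
  case False
  then obtain i where i: "i < length w" "odot w v \<sigma> = take i w @ drop (Suc i) w"
    using assms(3-5) unfolding admissible_def by metis
  have "set (take i w @ drop (Suc i) w) \<subseteq> set w"
    using set_take_subset set_drop_subset by fastforce
  then have "odot w v \<sigma> \<in> words E"
    using assms(4) i by (auto simp: words_def)
  moreover have "length (odot w v \<sigma>) = length w - 1"
    using i by simp
  ultimately show ?thesis
    using i by (cases "length w") auto
qed

lemma update_pair_words2:
  assumes "symp E" "irreflp E" "admissible E odot" "u \<in> words2 E"
    and "S0 \<omega> \<in> prefs E" "S1 \<omega> \<in> prefs E"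
  shows "update_pair odot u \<omega> \<in> words2 E"
proof -
  note first = admissible_update_words[OF assms(1-3) _ assms(5), of u "V0 \<omega>"]
  note second = admissible_update_words[OF assms(1-3) first[THEN conjunct1] assms(6), of "V1 \<omega>"]
  show ?thesis
    using assms(4) first second by (simp add: words2_def update_pair_def)
qed

section \<open>Eventually constant sequences\<close>

definition eventually_const :: "(nat \<Rightarrow> 'a) \<Rightarrow> bool" where
  "eventually_const f \<longleftrightarrow> (\<exists>N. \<forall>m\<ge>N. f m = f N)"

definition eventual_value :: "(nat \<Rightarrow> 'a) \<Rightarrow> 'a" where
  "eventual_value f = f (LEAST N. \<forall>m\<ge>N. f m = f N)"

lemma eventually_constI: "\<forall>m\<ge>N. f m = c \<Longrightarrow> eventually_const f"
  unfolding eventually_const_def by (rule exI[of _ N]) auto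

lemma eventually_eq_eventual_value:
  assumes "eventually_const f"
  shows "\<exists>N. \<forall>m\<ge>N. f m = eventual_value f"
proof -
  have "\<forall>m\<ge>(LEAST N. \<forall>m\<ge>N. f m = f N). f m = eventual_value f"
    unfolding eventual_value_def
    by (rule LeastI_ex) (use assms in \<open>simp add: eventually_const_def\<close>)
  then show ?thesis by blast
qed

lemma eventual_value_eqI:
  assumes "\<forall>m\<ge>N. f m = c"
  shows "eventual_value f = c"
proof -
  obtain N' where "\<forall>m\<ge>N'. f m = eventual_value f"
    using eventually_eq_eventual_value[OF eventually_constI[OF assms]] by blast
  then show ?thesis
    using assms by (metis max.cobounded1 max.cobounded2)
qed

lemma measurable_eventual_value:
  fixes f :: "nat \<Rightarrow> 'a \<Rightarrow> 'b::countable"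
  assumes "\<And>m. f m \<in> M \<rightarrow>\<^sub>M count_space UNIV"
  shows "(\<lambda>x. eventual_value (\<lambda>m. f m x)) \<in> M \<rightarrow>\<^sub>M count_space UNIV"
    and "Measurable.pred M (\<lambda>x. eventually_const (\<lambda>m. f m x))"
proof -
  have "Measurable.pred M (\<lambda>x. f m x = f N x)" for m N
    by (rule measurable_compose_countable[OF pred_count_space_const1[OF assms] assms])
  then have tail: "Measurable.pred M (\<lambda>x. \<forall>m\<ge>N. f m x = f N x)" for N
    by measurable
  have "(\<lambda>x. LEAST N. \<forall>m\<ge>N. f m x = f N x) \<in> M \<rightarrow>\<^sub>M count_space UNIV"
    by (rule measurable_Least[OF tail])
  then show "(\<lambda>x. eventual_value (\<lambda>m. f m x)) \<in> M \<rightarrow>\<^sub>M count_space UNIV"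
    unfolding eventual_value_def by (rule measurable_compose_countable[OF assms])
  show "Measurable.pred M (\<lambda>x. eventually_const (\<lambda>m. f m x))"
    unfolding eventually_const_def using tail by measurable
qed

lemma eventual_value_backward_Useq_shift:
  assumes "eventually_const (\<lambda>m. backward_Useq odot Y m \<omega>)"
  shows "eventual_value (\<lambda>m. backward_Useq odot Y m (shift \<omega>))
    = update_pair odot (eventual_value (\<lambda>m. backward_Useq odot Y m \<omega>)) \<omega>"
proof -
  obtain N where N: "\<forall>m\<ge>N. backward_Useq odot Y m \<omega> = eventual_value (\<lambda>m. backward_Useq odot Y m \<omega>)"
    using eventually_eq_eventual_value[OF assms] by blast
  have "\<forall>m\<ge>Suc N. backward_Useq odot Y m (shift \<omega>)
      = update_pair odot (eventual_value (\<lambda>m. backward_Useq odot Y m \<omega>)) \<omega>"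
  proof (intro allI impI)
    fix m assume "Suc N \<le> m"
    then obtain m' where "m = Suc m'" "N \<le> m'"
      by (cases m) auto
    then show "backward_Useq odot Y m (shift \<omega>)
        = update_pair odot (eventual_value (\<lambda>m. backward_Useq odot Y m \<omega>)) \<omega>"
      using N by (simp add: backward_Useq_Suc_shift)
  qed
  then show ?thesis by (rule eventual_value_eqI)
qed

section \<open>Measurability on the canonical space\<close>

lemma space_canonical:
  assumes "sets M = sets (canonical_space E)"
  shows "space M = {\<omega>. \<forall>i. \<omega> i \<in> arrivals E}"
  using sets_eq_imp_space_eq[OF assms]
  by (auto simp: canonical_space_def space_PiM PiE_def Pi_def extensional_def)

lemma measurable_coordinate:
  assumes "sets M = sets (canonical_space E)"
  shows "(\<lambda>\<omega>. \<omega> i) \<in> M \<rightarrow>\<^sub>M count_space (arrivals E)"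
  unfolding measurable_cong_sets[OF assms refl] canonical_space_def
  by (rule measurable_component_singleton) simp

lemma measurable_translate:
  assumes "sets M = sets (canonical_space E)"
  shows "(\<lambda>\<omega> i. \<omega> (i + c)) \<in> M \<rightarrow>\<^sub>M M"
proof -
  have "(\<lambda>\<omega> i. \<omega> (i + c)) \<in> M \<rightarrow>\<^sub>M canonical_space E"
    unfolding canonical_space_def
    by (rule measurable_PiM_single')
      (use measurable_coordinate[OF assms] space_canonical[OF assms] in auto)
  then show ?thesis
    unfolding measurable_cong_sets[OF refl assms] .
qed

lemma measurable_shift_funpow:
  assumes "sets M = sets (canonical_space E)"
  shows "shift ^^ n \<in> M \<rightarrow>\<^sub>M M" and "shift_inv ^^ n \<in> M \<rightarrow>\<^sub>M M"
  using measurable_translate[OF assms, of "int n"] measurable_translate[OF assms, of "- int n"]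
  by (simp_all add: shift_funpow[abs_def] shift_inv_funpow[abs_def])

lemma measurable_update_pair:
  assumes "sets M = sets (canonical_space E)"
  shows "update_pair odot u \<in> M \<rightarrow>\<^sub>M count_space UNIV"
proof -
  have "(\<lambda>a. odot (odot u (fst a) (fst (snd a))) (fst (snd (snd a))) (snd (snd (snd a))))
      \<circ> (\<lambda>\<omega>. \<omega> 0) \<in> M \<rightarrow>\<^sub>M count_space UNIV"
    using measurable_coordinate[OF assms] by (rule measurable_comp) simp
  then show ?thesis
    by (simp add: comp_def update_pair_def[abs_def] V0_def S0_def V1_def S1_def)
qed

lemma measurable_Useq:
  fixes odot :: "'v::finite list \<Rightarrow> 'v \<Rightarrow> ('v \<Rightarrow> 'v list) \<Rightarrow> 'v list"
  assumes "sets M = sets (canonical_space E)" "Y \<in> M \<rightarrow>\<^sub>M count_space UNIV"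
  shows "Useq odot Y n \<in> M \<rightarrow>\<^sub>M count_space UNIV"
proof (induction n)
  case 0
  then show ?case using assms(2) by (simp add: fun_eq_iff[symmetric])
next
  case (Suc n)
  have "(\<lambda>\<omega>. update_pair odot u ((shift ^^ n) \<omega>)) \<in> M \<rightarrow>\<^sub>M count_space UNIV" for u
    using measurable_comp[OF measurable_shift_funpow(1)[OF assms(1)] measurable_update_pair[OF assms(1)]]
    by (simp add: comp_def)
  then show ?case
    unfolding Useq_Suc_update_pair by (rule measurable_compose_countable[OF _ Suc])
qed

lemma measurable_backward_Useq:
  fixes odot :: "'v::finite list \<Rightarrow> 'v \<Rightarrow> ('v \<Rightarrow> 'v list) \<Rightarrow> 'v list"
  assumes "sets M = sets (canonical_space E)" "Y \<in> M \<rightarrow>\<^sub>M count_space UNIV"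
  shows "backward_Useq odot Y n \<in> M \<rightarrow>\<^sub>M count_space UNIV"
  using measurable_comp[OF measurable_shift_funpow(2)[OF assms(1)] measurable_Useq[OF assms]]
  by (simp add: comp_def backward_Useq_def[abs_def])

lemma Useq_words2:
  assumes "sets M = sets (canonical_space E)" "symp E" "irreflp E" "admissible E odot"
    and "\<forall>\<omega> \<in> space M. Y \<omega> \<in> words2 E" "\<omega> \<in> space M"
  shows "Useq odot Y m \<omega> \<in> words2 E"
proof (induction m)
  case 0
  then show ?case using assms(5,6) by simp
next
  case (Suc m)
  have "(shift ^^ m) \<omega> 0 \<in> arrivals E"
    using assms(6) space_canonical[OF assms(1)] by (simp add: shift_funpow)
  then have "S0 ((shift ^^ m) \<omega>) \<in> prefs E" "S1 ((shift ^^ m) \<omega>) \<in> prefs E"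
    by (auto simp: arrivals_def S0_def S1_def)
  then show ?case
    unfolding Useq_Suc_update_pair by (rule update_pair_words2[OF assms(2-4) Suc])
qed

section \<open>The coupling event\<close>

lemma measure_preserving_funpow:
  assumes "measure_preserving_map M T"
  shows "distr M M (T ^^ n) = M"
proof (induction n)
  case 0
  then show ?case by (simp add: distr_id2 id_def)
next
  case (Suc n)
  have T: "T \<in> M \<rightarrow>\<^sub>M M" "distr M M T = M"
    using assms by (simp_all add: measure_preserving_map_def)
  have Tn: "T ^^ n \<in> M \<rightarrow>\<^sub>M M"
    using T(1) by (induction n) (auto intro: measurable_comp)
  have "distr M M (T ^^ Suc n) = distr (distr M M (T ^^ n)) M T"
    using distr_distr[OF T(1) Tn] by simp
  then show ?case using Suc T(2) by (simp add: comp_def)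
qed

lemma sets_shift_set:
  assumes "sets M = sets (canonical_space E)" "A \<in> sets M"
  shows "shift_set M k A \<in> sets M"
proof -
  have "shift_set M k A = (shift_inv ^^ k) -` A \<inter> space M"
    by (auto simp: shift_set_def)
  then show ?thesis
    using measurable_sets[OF measurable_shift_funpow(2)[OF assms(1)] assms(2)] by simp
qed

lemma measure_shift_set:
  assumes "sets M = sets (canonical_space E)" "measure_preserving_map M shift" "A \<in> sets M"
  shows "measure M (shift_set M k A) = measure M A"
proof -
  note shift_k = measurable_shift_funpow(1)[OF assms(1)]
  have "A = (shift ^^ k) -` shift_set M k A \<inter> space M"
    using sets.sets_into_space[OF assms(3)] measurable_space[OF shift_k]
    by (auto simp: shift_set_def)
  then have "measure M A = measure (distr M M (shift ^^ k)) (shift_set M k A)"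
    by (simp add: measure_distr[OF shift_k sets_shift_set[OF assms(1,3)]])
  then show ?thesis
    using measure_preserving_funpow[OF assms(2)] by simp
qed

definition coupling_event ::
  "'v omega measure \<Rightarrow> ('v list \<Rightarrow> 'v \<Rightarrow> ('v \<Rightarrow> 'v list) \<Rightarrow> 'v list) \<Rightarrow> ('v omega \<Rightarrow> 'v list)
     \<Rightarrow> nat \<Rightarrow> 'v omega set" where
  "coupling_event M odot Y n =
     (\<Inter>k. \<Union>l\<in>{0..n}. Aev M odot Y l \<inter> shift_set M k (Aev M odot Y (l + k)))"

lemma sets_coupling_event:
  fixes odot :: "'v::finite list \<Rightarrow> 'v \<Rightarrow> ('v \<Rightarrow> 'v list) \<Rightarrow> 'v list"
  assumes "sets M = sets (canonical_space E)" "Y \<in> M \<rightarrow>\<^sub>M count_space UNIV"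
  shows "coupling_event M odot Y n \<in> sets M"
proof -
  have Aev: "Aev M odot Y l \<in> sets M" for l
    using pred_count_space_const1[OF measurable_Useq[OF assms, where n = l], where c = "[]"]
    by (simp add: Aev_def pred_def)
  show ?thesis
    unfolding coupling_event_def using Aev sets_shift_set[OF assms(1)]
    by (intro sets.countable_INT sets.finite_UN) auto
qed

lemma backward_Useq_const_on_coupling_event:
  assumes "\<omega> \<in> shift_set M n (coupling_event M odot Y n)" "n \<le> m"
  shows "backward_Useq odot Y m \<omega> = backward_Useq odot Y n \<omega>"
proof -
  define \<eta> where "\<eta> = (shift_inv ^^ n) \<omega>"
  obtain k where k: "m = n + k"
    using assms(2) le_Suc_ex by blast
  have "\<eta> \<in> (\<Union>l\<in>{0..n}. Aev M odot Y l \<inter> shift_set M k (Aev M odot Y (l + k)))"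
    using assms(1) by (simp add: shift_set_def \<eta>_def coupling_event_def)
  then obtain l where l: "l \<le> n" "Useq odot Y l \<eta> = []"
    "Useq odot Y (l + k) ((shift_inv ^^ k) \<eta>) = []"
    by (auto simp: Aev_def shift_set_def)
  have "Useq odot Y (n + k) ((shift_inv ^^ k) \<eta>) = Useq odot Y n \<eta>"
    by (rule Useq_coupling) (use l in auto)
  moreover have "(shift_inv ^^ m) \<omega> = (shift_inv ^^ k) \<eta>"
    by (simp add: k \<eta>_def funpow_add add.commute)
  ultimately show ?thesis
    by (simp add: backward_Useq_def k \<eta>_def)
qed

lemma (in prob_space) AE_of_measure_tendsto_1:
  assumes "\<And>n. C n \<in> events" "\<And>n \<omega>. \<omega> \<in> C n \<Longrightarrow> P \<omega>" "(\<lambda>n. prob (C n)) \<longlonglongrightarrow> 1"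
  shows "AE \<omega> in M. P \<omega>"
proof -
  define N where "N = (\<Inter>n. space M - C n)"
  have N: "N \<in> events"
    unfolding N_def using assms(1) by auto
  have "prob N \<le> 1 - prob (C n)" for n
  proof -
    have "prob N \<le> prob (space M - C n)"
      by (rule finite_measure_mono) (auto simp: N_def assms(1))
    then show ?thesis using prob_compl[OF assms(1)] by simp
  qed
  moreover have "(\<lambda>n. 1 - prob (C n)) \<longlonglongrightarrow> 0"
    using tendsto_diff[OF tendsto_const assms(3), of 1] by simp
  ultimately have "prob N \<le> 0"
    by (intro LIMSEQ_le_const[of "\<lambda>n. 1 - prob (C n)"]) auto
  then have null: "emeasure M N = 0"
    by (simp add: emeasure_eq_measure measure_nonneg antisym)
  show ?thesis
  proof (rule AE_I[OF _ null N])
    show "{\<omega> \<in> space M. \<not> P \<omega>} \<subseteq> N"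
      using assms(2) by (auto simp: N_def)
  qed
qed

theorem mainTheorem12:
  fixes E :: "'v::finite \<Rightarrow> 'v \<Rightarrow> bool"
    and odot :: "'v list \<Rightarrow> 'v \<Rightarrow> ('v \<Rightarrow> 'v list) \<Rightarrow> 'v list"
    and \<nu> :: "('v \<Rightarrow> 'v list) pmf"
    and \<mu>0 \<mu>1 :: "'v pmf"
    and M :: "'v omega measure"
    and Y :: "'v omega \<Rightarrow> 'v list"
  assumes graph: "simple_connected_graph E"
    and policy: "admissible E odot"
    and nu_S: "set_pmf \<nu> \<subseteq> prefs E"
    and prob: "prob_space M"
    and canon: "sets M = sets (canonical_space E)"
    and stationary: "measure_preserving_map M shift"
    and ergodic: "ergodic_map M shift"
    and law_V0: "\<forall>n::int. distr M (count_space UNIV) (\<lambda>\<omega>. fst (\<omega> n)) = measure_pmf \<mu>0"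
    and law_V1: "\<forall>n::int. distr M (count_space UNIV) (\<lambda>\<omega>. fst (snd (snd (\<omega> n)))) = measure_pmf \<mu>1"
    and law_S0: "\<forall>n::int. distr M (count_space UNIV) (\<lambda>\<omega>. fst (snd (\<omega> n))) = measure_pmf \<nu>"
    and law_S1: "\<forall>n::int. distr M (count_space UNIV) (\<lambda>\<omega>. snd (snd (snd (\<omega> n)))) = measure_pmf \<nu>"
    and full_support: "\<forall>v. (pmf \<mu>0 v + pmf \<mu>1 v) / 2 > 0"
    and Y_meas: "Y \<in> M \<rightarrow>\<^sub>M count_space UNIV"
    and Y_W2: "\<forall>\<omega> \<in> space M. Y \<omega> \<in> words2 E"
    and cond: "(\<lambda>n. measure M (\<Inter>k. \<Union>l\<in>{0..n}.
                  Aev M odot Y l \<inter> shift_set M k (Aev M odot Y (l + k)))) \<longlonglongrightarrow> 1"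
  shows "\<exists>U. U \<in> M \<rightarrow>\<^sub>M count_space UNIV
           \<and> (\<forall>\<omega> \<in> space M. U \<omega> \<in> words2 E)
           \<and> (AE \<omega> in M. U (shift \<omega>) = odot (odot (U \<omega>) (V0 \<omega>) (S0 \<omega>)) (V1 \<omega>) (S1 \<omega>))
           \<and> (AE \<omega> in M. \<exists>N. \<forall>n\<ge>N. Useq odot Y n ((shift_inv ^^ n) \<omega>) = U \<omega>)"
proof -
  interpret prob_space M by (rule prob)
  have sym: "symp E" and irrefl: "irreflp E"
    using graph by (auto simp: simple_connected_graph_def symp_def irreflp_def)
  note coupling_sets = sets_coupling_event[OF canon Y_meas]
  define U where "U \<omega> = eventual_value (\<lambda>m. backward_Useq odot Y m \<omega>)" for \<omega>
  have const: "AE \<omega> in M. eventually_const (\<lambda>m. backward_Useq odot Y m \<omega>)"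
  proof (rule AE_of_measure_tendsto_1)
    show "shift_set M n (coupling_event M odot Y n) \<in> events" for n
      by (rule sets_shift_set[OF canon coupling_sets])
    show "(\<lambda>n. prob (shift_set M n (coupling_event M odot Y n))) \<longlonglongrightarrow> 1"
      using cond by (simp add: measure_shift_set[OF canon stationary coupling_sets] coupling_event_def[symmetric])
  qed (use backward_Useq_const_on_coupling_event in \<open>blast intro: eventually_constI\<close>)
  have U_words2: "U \<omega> \<in> words2 E" if "\<omega> \<in> space M" for \<omega>
    using Useq_words2[OF canon sym irrefl policy Y_W2]
      measurable_space[OF measurable_shift_funpow(2)[OF canon] that]
    by (simp add: U_def eventual_value_def backward_Useq_def)
  show ?thesis
  proof (intro exI conjI ballI)
    show "U \<in> M \<rightarrow>\<^sub>M count_space UNIV"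
      unfolding U_def by (rule measurable_eventual_value(1)[OF measurable_backward_Useq[OF canon Y_meas]])
    show "AE \<omega> in M. U (shift \<omega>) = odot (odot (U \<omega>) (V0 \<omega>) (S0 \<omega>)) (V1 \<omega>) (S1 \<omega>)"
      using const by eventually_elim (simp add: U_def eventual_value_backward_Useq_shift update_pair_def)
    show "AE \<omega> in M. \<exists>N. \<forall>n\<ge>N. Useq odot Y n ((shift_inv ^^ n) \<omega>) = U \<omega>"
      using const by eventually_elim (simp add: U_def eventually_eq_eventual_value backward_Useq_def[symmetric])
  qed (rule U_words2)
qed

end
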